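(* Let $\mathcal{S}$ be a reduced LLD subspace of $\mathcal{L}(U,V)$, and let $c$ be the greatest integer for which $\mathcal{S}$ is $c$-LLD. Then $\widehat{\mathcal{S}}$ is semi-primitive if and only if $\mathcal{S}$ is minimal among the $c$-LLD subspaces of $\mathcal{L}(U,V)$.
   Context: $U,V$ finite-dimensional over a field $\mathbb{K}$. $\mathcal{S}$ is $c$-LLD if for every $x\in U$, $\dim\{f\in\mathcal{S}\mid f(x)=0\}\geq c$; LLD means $1$-LLD. $\mathcal{S}$ is reduced if $\bigcap_{f\in\mathcal{S}}\ker f=\{0\}$ and $\sum_{f\in\mathcal{S}}\mathrm{im} f=V$. $\widehat{\mathcal{S}}:=\{f\mapsto f(x)\mid x\in U\}\subseteq\mathcal{L}(\mathcal{S},V)$. For an operator space $\mathcal{T}\subseteq\mathcal{L}(W,V)$: $\mathcal{T}$ is $d$-defective if $\dim\ker g\geq d$ for all $g\in\mathcal{T}$; its defectiveness index is the greatest such $d$; $\mathcal{T}$ is semi-primitive if it is reduced and there is no linear hyperplane $W'$ of $W$ such that $\{g_{|W'}\mid g\in\mathcal{T}\}$ is $d$-defective, $d$ being the defectiveness index of $\mathcal{T}$. *)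

theory Defs
  imports Complex_Main "HOL-Library.Function_Algebras"
begin

text \<open>Vector spaces over a field 'a are given by their scalar multiplication
  (the locale vector_space of Vector_Spaces).\<close>

definition fun_scale :: "('a::field \<Rightarrow> 'v::ab_group_add \<Rightarrow> 'v) \<Rightarrow> 'a \<Rightarrow> ('u \<Rightarrow> 'v) \<Rightarrow> ('u \<Rightarrow> 'v)" where
  "fun_scale sv = (\<lambda>c f x. sv c (f x))"

definition fin_dim :: "('a::field \<Rightarrow> 'v::ab_group_add \<Rightarrow> 'v) \<Rightarrow> bool" where
  "fin_dim s \<longleftrightarrow> (\<exists>B. finite B \<and> module.span s B = UNIV)"

definition c_LLD :: "('a::field \<Rightarrow> 'v::ab_group_add \<Rightarrow> 'v) \<Rightarrow> ('u \<Rightarrow> 'v) set \<Rightarrow> nat \<Rightarrow> bool" where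
  "c_LLD sv S c \<longleftrightarrow> (\<forall>x. c \<le> vector_space.dim (fun_scale sv) {f \<in> S. f x = 0})"

definition LLD :: "('a::field \<Rightarrow> 'v::ab_group_add \<Rightarrow> 'v) \<Rightarrow> ('u \<Rightarrow> 'v) set \<Rightarrow> bool" where
  "LLD sv S \<longleftrightarrow> c_LLD sv S 1"

definition op_reduced :: "('a::field \<Rightarrow> 'w::ab_group_add \<Rightarrow> 'w) \<Rightarrow> ('a \<Rightarrow> 'v::ab_group_add \<Rightarrow> 'v)
    \<Rightarrow> 'w set \<Rightarrow> ('w \<Rightarrow> 'v) set \<Rightarrow> bool" where
  "op_reduced sw sv W T \<longleftrightarrow>
     {w \<in> W. \<forall>g\<in>T. g w = 0} = {0} \<and> module.span sv (\<Union>g\<in>T. g ` W) = UNIV"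

definition defective :: "('a::field \<Rightarrow> 'w::ab_group_add \<Rightarrow> 'w) \<Rightarrow> 'w set \<Rightarrow> ('w \<Rightarrow> 'v::zero) set \<Rightarrow> nat \<Rightarrow> bool" where
  "defective sw W T d \<longleftrightarrow> (\<forall>g\<in>T. d \<le> vector_space.dim sw {w \<in> W. g w = 0})"

definition defectiveness_index :: "('a::field \<Rightarrow> 'w::ab_group_add \<Rightarrow> 'w) \<Rightarrow> 'w set \<Rightarrow> ('w \<Rightarrow> 'v::zero) set \<Rightarrow> nat" where
  "defectiveness_index sw W T = (GREATEST d. defective sw W T d)"

text \<open>Restricting every g to a hyperplane W' of W: the kernel of the restriction
  is {w \<in> W'. g w = 0}.\<close>
definition semi_primitive :: "('a::field \<Rightarrow> 'w::ab_group_add \<Rightarrow> 'w) \<Rightarrow> ('a \<Rightarrow> 'v::ab_group_add \<Rightarrow> 'v)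
    \<Rightarrow> 'w set \<Rightarrow> ('w \<Rightarrow> 'v) set \<Rightarrow> bool" where
  "semi_primitive sw sv W T \<longleftrightarrow> op_reduced sw sv W T \<and>
     \<not> (\<exists>W'. module.subspace sw W' \<and> W' \<subseteq> W \<and>
            vector_space.dim sw W' + 1 = vector_space.dim sw W \<and>
            defective sw W' T (defectiveness_index sw W T))"

text \<open>The dual operator space S-hat = {f \<mapsto> f x | x \<in> U}, maps defined on S.\<close>
definition hat :: "('u \<Rightarrow> 'v) set \<Rightarrow> (('u \<Rightarrow> 'v) \<Rightarrow> 'v) set" where
  "hat S = {(\<lambda>f. f x) | x. True}"

end

theory Submission imports Defs begin

text \<open>
  The dual space hat S consists of the evaluations f \<mapsto> f x, so for any
  set X of operators the kernel of the evaluation at x, restricted to X, is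
  {f \<in> X. f x = 0}.  Hence "hat S restricted to X is d-defective" says literally
  that X is d-LLD, the defectiveness index of hat S is the greatest c with S c-LLD,
  and hat S is reduced whenever S is (evaluations separate maps; the images of the
  evaluations are the images of the operators).  Semi-primitivity of hat S thus
  says: no hyperplane of S is c-LLD.  Since the c-LLD property is inherited by
  larger subsets of S, and every proper subspace of the finite-dimensional space S
  lies in a hyperplane of S, this is equivalent to no proper subspace being c-LLD.
\<close>

lemma vector_space_fun_scale:
  assumes "vector_space sv"
  shows "vector_space (fun_scale sv)"
proof -
  interpret V: vector_space sv by fact
  show ?thesis
    by unfold_locales
      (auto simp: fun_scale_def fun_eq_iff V.scale_right_distrib V.scale_left_distrib)
qed

lemma sum_fun_apply: "(\<Sum>i\<in>A. g i) x = (\<Sum>i\<in>A. g i x)"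
  by (induction A rule: infinite_finite_induct) auto

context vector_space begin

lemma dim_mono_finitely_spanned:
  assumes "A \<subseteq> B" "B \<subseteq> span F" "finite F"
  shows "dim A \<le> dim B"
proof -
  obtain B0 where B0: "B0 \<subseteq> B" "independent B0" "B \<subseteq> span B0"
    by (rule maximal_independent_subset)
  have "finite B0"
    using independent_span_bound[OF assms(3) B0(2)] B0(1) assms(2) by blast
  have "dim A \<le> card B0"
    using dim_le_card[OF _ \<open>finite B0\<close>] assms(1) B0(3) by blast
  also have "card B0 = dim B"
    using basis_card_eq_dim[OF B0(1,3,2)] .
  finally show ?thesis .
qed

text \<open>Every proper subspace of a finitely spanned subspace S is contained in a
  hyperplane of S: extend a basis of the subspace to one of S and drop a new vector.\<close>
lemma proper_subspace_in_hyperplane: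
  assumes "subspace S'" "S' \<subset> S" "subspace S" "S \<subseteq> span F" "finite F"
  obtains H where "subspace H" "S' \<subseteq> H" "H \<subseteq> S" "dim H + 1 = dim S"
proof -
  obtain A0 where A0: "A0 \<subseteq> S'" "independent A0" "S' \<subseteq> span A0"
    by (rule maximal_independent_subset)
  obtain B0 where B0: "A0 \<subseteq> B0" "B0 \<subseteq> S" "independent B0" "S \<subseteq> span B0"
    using maximal_independent_subset_extend[of A0 S] A0 assms(2) by blast
  have "finite B0"
    using independent_span_bound[OF assms(5) B0(3)] B0(2) assms(4) by blast
  have "B0 \<noteq> A0"
  proof
    assume "B0 = A0"
    then have "S \<subseteq> S'" using B0(4) span_minimal[OF A0(1) assms(1)] by blast
    with assms(2) show False by blast
  qed
  then obtain b where b: "b \<in> B0" "b \<notin> A0" using B0(1) by blast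
  define H where "H = span (B0 - {b})"
  have "subspace H" by (simp add: H_def)
  moreover have "S' \<subseteq> H"
    unfolding H_def using A0(3) B0(1) b span_mono[of A0 "B0 - {b}"] by blast
  moreover have "H \<subseteq> S"
    unfolding H_def using B0(2) span_minimal[of "B0 - {b}" S] assms(3) by blast
  moreover have "dim H + 1 = dim S"
  proof -
    have "dim H = card (B0 - {b})"
      unfolding H_def using B0(3)
      by (metis Diff_subset dim_span_eq_card_independent independent_mono)
    also have "\<dots> + 1 = card B0"
      using card_Suc_Diff1[OF \<open>finite B0\<close> b(1)] by simp
    also have "\<dots> = dim S" using basis_card_eq_dim[OF B0(2,4,3)] .
    finally show ?thesis .
  qed
  ultimately show ?thesis using that by blast
qed

lemma no_proper_subspace_iff_no_hyperplane:
  assumes "subspace S" "S \<subseteq> span F" "finite F"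
    and upward: "\<And>A B. A \<subseteq> B \<Longrightarrow> B \<subseteq> S \<Longrightarrow> P A \<Longrightarrow> P B"
  shows "(\<forall>S'. subspace S' \<and> S' \<subset> S \<longrightarrow> \<not> P S') \<longleftrightarrow>
         \<not> (\<exists>H. subspace H \<and> H \<subseteq> S \<and> dim H + 1 = dim S \<and> P H)"
proof
  assume none: "\<forall>S'. subspace S' \<and> S' \<subset> S \<longrightarrow> \<not> P S'"
  show "\<not> (\<exists>H. subspace H \<and> H \<subseteq> S \<and> dim H + 1 = dim S \<and> P H)"
  proof
    assume "\<exists>H. subspace H \<and> H \<subseteq> S \<and> dim H + 1 = dim S \<and> P H"
    then obtain H where "subspace H" "H \<subseteq> S" "dim H + 1 = dim S" "P H" by blast
    moreover from \<open>dim H + 1 = dim S\<close> have "H \<noteq> S" by auto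
    ultimately show False using none by blast
  qed
next
  assume no_hyp: "\<not> (\<exists>H. subspace H \<and> H \<subseteq> S \<and> dim H + 1 = dim S \<and> P H)"
  show "\<forall>S'. subspace S' \<and> S' \<subset> S \<longrightarrow> \<not> P S'"
  proof (intro allI impI notI)
    fix S' assume S': "subspace S' \<and> S' \<subset> S" and "P S'"
    then obtain H where "subspace H" "S' \<subseteq> H" "H \<subseteq> S" "dim H + 1 = dim S"
      using proper_subspace_in_hyperplane assms(1-3) by blast
    with upward[OF _ _ \<open>P S'\<close>] no_hyp show False by blast
  qed
qed

end

text \<open>Linear maps between finite-dimensional spaces lie in the span of finitely many
  maps, namely u \<mapsto> (b-th coordinate of u) \<cdot> e for basis vectors b of U and e of V.\<close>
lemma linear_maps_finitely_spanned:
  assumes su: "vector_space su" and sv: "vector_space sv"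
    and fu: "fin_dim su" and fv: "fin_dim sv"
  obtains F where "finite F" "{f. Vector_Spaces.linear su sv f} \<subseteq> module.span (fun_scale sv) F"
proof -
  interpret U: vector_space su by fact
  interpret V: vector_space sv by fact
  interpret W: vector_space "fun_scale sv" using vector_space_fun_scale[OF sv] .
  obtain Bu where Bu: "finite Bu" "U.span Bu = UNIV" using fu unfolding fin_dim_def by blast
  obtain Bv where Bv: "finite Bv" "V.span Bv = UNIV" using fv unfolding fin_dim_def by blast
  have "\<forall>u. \<exists>c. u = (\<Sum>b\<in>Bu. su (c b) b)" using U.span_finite[OF Bu(1)] Bu(2) by auto
  from choice[OF this] obtain cu where cu: "\<And>u. u = (\<Sum>b\<in>Bu. su (cu u b) b)" by blast
  have "\<forall>v. \<exists>c. v = (\<Sum>e\<in>Bv. sv (c e) e)" using V.span_finite[OF Bv(1)] Bv(2) by auto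
  from choice[OF this] obtain cv where cv: "\<And>v. v = (\<Sum>e\<in>Bv. sv (cv v e) e)" by blast
  define elem where "elem = (\<lambda>(b, e). \<lambda>u. sv (cu u b) e)"
  have "f \<in> W.span (elem ` (Bu \<times> Bv))" if "Vector_Spaces.linear su sv f" for f
  proof -
    interpret L: Vector_Spaces.linear su sv f by fact
    have "f = (\<Sum>p\<in>Bu \<times> Bv. fun_scale sv (cv (f (fst p)) (snd p)) (elem p))"
    proof
      fix u
      have "f u = f (\<Sum>b\<in>Bu. su (cu u b) b)" by (rule arg_cong[OF cu])
      also have "\<dots> = (\<Sum>b\<in>Bu. sv (cu u b) (f b))" by (simp add: L.sum L.scale)
      also have "\<dots> = (\<Sum>b\<in>Bu. sv (cu u b) (\<Sum>e\<in>Bv. sv (cv (f b) e) e))"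
        by (rule sum.cong[OF refl], rule arg_cong[OF cv])
      also have "\<dots> = (\<Sum>b\<in>Bu. \<Sum>e\<in>Bv. sv (cv (f b) e) (sv (cu u b) e))"
        by (simp add: V.scale_sum_right mult.commute)
      also have "\<dots> = (\<Sum>p\<in>Bu \<times> Bv. fun_scale sv (cv (f (fst p)) (snd p)) (elem p)) u"
        by (simp add: sum.cartesian_product split_def sum_fun_apply fun_scale_def elem_def)
      finally show "f u = \<dots>" .
    qed
    also have "\<dots> \<in> W.span (elem ` (Bu \<times> Bv))"
      by (intro W.span_sum W.span_scale W.span_base) auto
    finally show ?thesis .
  qed
  moreover have "finite (elem ` (Bu \<times> Bv))" using Bu(1) Bv(1) by simp
  ultimately show ?thesis using that by blast
qed

text \<open>Restricted to a set X of operators, the dual space hat S is d-defective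
  exactly when X is d-LLD: the kernel of evaluation at x is {f \<in> X. f x = 0}.\<close>
lemma defective_hat_iff_c_LLD:
  "defective (fun_scale sv) X (hat S) d \<longleftrightarrow> c_LLD sv X d"
  unfolding defective_def c_LLD_def hat_def by auto

lemma defectiveness_index_hat:
  "defectiveness_index (fun_scale sv) S (hat S) = (GREATEST k. c_LLD sv S k)"
  unfolding defectiveness_index_def defective_hat_iff_c_LLD ..

text \<open>The dual of a reduced operator space (containing 0) is reduced: only the zero
  map vanishes at every point, and the images of the evaluations on S are the
  images of the operators of S.\<close>
lemma op_reduced_hat:
  assumes "0 \<in> S" and "op_reduced su sv UNIV S"
  shows "op_reduced (fun_scale sv) sv S (hat S)"
proof -
  have eval: "(\<lambda>f. f x) \<in> hat S" for x by (auto simp: hat_def)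
  have "w = 0" if "\<forall>g\<in>hat S. g w = 0" for w
    using that eval unfolding fun_eq_iff zero_fun_def by fastforce
  then have "{w \<in> S. \<forall>g\<in>hat S. g w = 0} = {0}"
    using assms(1) by (auto simp: hat_def)
  moreover have "(\<Union>g\<in>hat S. g ` S) = (\<Union>g\<in>S. g ` UNIV)"
    by (auto simp: hat_def)
  ultimately show ?thesis using assms(2) unfolding op_reduced_def by simp
qed

lemma c_LLD_upward:
  assumes "vector_space sv" "S \<subseteq> module.span (fun_scale sv) F" "finite F"
    and "A \<subseteq> B" "B \<subseteq> S" "c_LLD sv A c"
  shows "c_LLD sv B c"
  unfolding c_LLD_def
proof
  interpret W: vector_space "fun_scale sv" using vector_space_fun_scale[OF assms(1)] .
  fix x
  have "W.dim {f \<in> A. f x = 0} \<le> W.dim {f \<in> B. f x = 0}"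
    by (rule W.dim_mono_finitely_spanned[OF _ _ assms(3)]) (use assms(2,4,5) in auto)
  then show "c \<le> W.dim {f \<in> B. f x = 0}"
    using assms(6) unfolding c_LLD_def by (meson order.trans)
qed

theorem mainTheorem11:
  fixes su :: "'a::field \<Rightarrow> 'u::ab_group_add \<Rightarrow> 'u"
    and sv :: "'a \<Rightarrow> 'v::ab_group_add \<Rightarrow> 'v"
    and S :: "('u \<Rightarrow> 'v) set"
    and c :: nat
  assumes "vector_space su" and "vector_space sv"
    and "fin_dim su" and "fin_dim sv"
    and "S \<subseteq> {f. Vector_Spaces.linear su sv f}"
    and "module.subspace (fun_scale sv) S"
    and "op_reduced su sv UNIV S"
    and "LLD sv S"
    and "c = (GREATEST k. c_LLD sv S k)"
  shows "semi_primitive (fun_scale sv) sv S (hat S) \<longleftrightarrow>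
         (\<forall>S'. module.subspace (fun_scale sv) S' \<and> S' \<subset> S \<longrightarrow> \<not> c_LLD sv S' c)"
proof -
  interpret W: vector_space "fun_scale sv" using vector_space_fun_scale[OF assms(2)] .
  obtain F where "finite F" "{f. Vector_Spaces.linear su sv f} \<subseteq> W.span F"
    by (rule linear_maps_finitely_spanned[OF assms(1-4)])
  with assms(5) have F: "finite F" "S \<subseteq> W.span F" by auto
  have reduced: "op_reduced (fun_scale sv) sv S (hat S)"
    using op_reduced_hat[OF W.subspace_0[OF assms(6)] assms(7)] .
  have "semi_primitive (fun_scale sv) sv S (hat S) \<longleftrightarrow>
      \<not> (\<exists>H. W.subspace H \<and> H \<subseteq> S \<and> W.dim H + 1 = W.dim S \<and> c_LLD sv H c)"
    unfolding semi_primitive_def defectiveness_index_hat defective_hat_iff_c_LLD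
      assms(9)[symmetric] using reduced by simp
  also have "\<dots> \<longleftrightarrow> (\<forall>S'. W.subspace S' \<and> S' \<subset> S \<longrightarrow> \<not> c_LLD sv S' c)"
  proof (rule W.no_proper_subspace_iff_no_hyperplane[symmetric, OF assms(6) F(2,1)])
    show "c_LLD sv B c" if "A \<subseteq> B" "B \<subseteq> S" "c_LLD sv A c" for A B
      using c_LLD_upward[OF assms(2) F(2,1) that] .
  qed
  finally show ?thesis .
qed

end
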